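(* Let $A$ be an $n\times m$ matrix with entries in $\{0,1,-1\}$, $n\ge 2$. (i) If each column of $A$ has at most two nonzero entries, then for each $B\in\mathcal{Q}_0(A^t)$, $AB$ and $(AB)^{[2]}$ are $P_0$-matrices, and $AB$ is positive semistable. (ii) If each row of $A$ has at most two nonzero entries, then for each $B\in\mathcal{Q}_0(A^t)$, $AB$ is positive semistable.
   Context: For $M\in\mathbb{R}^{n\times m}$, $\mathcal{Q}(M)$ is the set of real matrices with the same entrywise sign pattern as $M$, and $\mathcal{Q}_0(M)$ its closure. A square real matrix is a $P_0$-matrix if all principal minors are nonnegative, and positive semistable if all eigenvalues have nonnegative real part. $M^{[2]}$ denotes the second additive compound of $M\in\mathbb{R}^{n\times n}$: the matrix of $u\wedge v\mapsto Mu\wedge v+u\wedge Mv$ on $\Lambda^2\mathbb{R}^n$ in the lexicographically ordered basis $e_i\wedge e_j$, $i<j$. *)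

theory Defs
  imports "Jordan_Normal_Form.Char_Poly" "Jordan_Normal_Form.DL_Submatrix"
begin

definition in_Q0 :: "real mat \<Rightarrow> real mat \<Rightarrow> bool" where
  "in_Q0 B M \<longleftrightarrow> dim_row B = dim_row M \<and> dim_col B = dim_col M \<and>
     (\<forall>i < dim_row M. \<forall>j < dim_col M.
        sgn (B $$ (i,j)) \<in> {0, sgn (M $$ (i,j))})"

definition P0_matrix :: "real mat \<Rightarrow> bool" where
  "P0_matrix M \<longleftrightarrow> dim_row M = dim_col M \<and>
     (\<forall>I \<subseteq> {0..<dim_row M}. det (submatrix M I I) \<ge> 0)"

definition pos_semistable :: "real mat \<Rightarrow> bool" where
  "pos_semistable M \<longleftrightarrow> dim_row M = dim_col M \<and>
     (\<forall>z. eigenvalue (map_mat complex_of_real M) z \<longrightarrow> Re z \<ge> 0)"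

text \<open>Index pairs (i,j), i<j<n, in lexicographic order (basis e_i wedge e_j).\<close>
definition wedge_pairs :: "nat \<Rightarrow> (nat \<times> nat) list" where
  "wedge_pairs n = concat (map (\<lambda>i. map (\<lambda>j. (i,j)) [Suc i..<n]) [0..<n])"

text \<open>Second additive compound: matrix of u wedge v \<mapsto> Mu wedge v + u wedge Mv.
  Entry at row (i,j), column (k,l) is the coefficient of e_i wedge e_j in
  M e_k wedge e_l + e_k wedge M e_l.\<close>
definition compound2 :: "real mat \<Rightarrow> real mat" where
  "compound2 M = (let ps = wedge_pairs (dim_row M) in
     mat (length ps) (length ps) (\<lambda>(a,b).
       (case ps ! a of (i,j) \<Rightarrow> case ps ! b of (k,l) \<Rightarrow>
          (if l = j then M $$ (i,k) else 0) - (if l = i then M $$ (j,k) else 0)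
        + (if k = i then M $$ (j,l) else 0) - (if k = j then M $$ (i,l) else 0))))"

end

(*
  For B in Q_0(A^T), expand det(AB) by multilinearity: it is a sum of terms (product of entries
  of B) * det R, where the rows of R are columns of A. If every column of A has at most two
  entries +-1, each such R is weakly diagonally dominant and the B-factor has the sign of the
  diagonal of R, so every term is nonnegative. The same structure is inherited by principal
  submatrices, by AB + tI = [A I] [B; tI], and by (AB)^[2], which factors as W(A) W(B^T)^T
  with W(A) again of this kind. Hence AB and (AB)^[2] are P_0 and det(AB + tI),
  det((AB)^[2] + tI) > 0 for t > 0: neither has a negative real eigenvalue, and a nonreal
  eigenvalue z of AB would make 2 Re z an eigenvalue of (AB)^[2] (eigenvector v /\ conj v).
  Part (ii) is part (i) for A^T B^T, whose nonzero eigenvalues are those of AB.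
*)
theory Submission
  imports Defs
begin

section \<open>Diagonally dominant matrices\<close>

lemma det_nonzero_if_strictly_diag_dominant:
  fixes M :: "real mat"
  assumes M: "M \<in> carrier_mat n n"
    and dominant: "\<And>i. i < n \<Longrightarrow> (\<Sum>j\<in>{0..<n}-{i}. \<bar>M $$ (i,j)\<bar>) < \<bar>M $$ (i,i)\<bar>"
  shows "det M \<noteq> 0"
proof
  assume "det M = 0"
  then obtain v where v: "v \<in> carrier_vec n" "v \<noteq> 0\<^sub>v n" "M *\<^sub>v v = 0\<^sub>v n"
    using det_0_iff_vec_prod_zero_field[OF M] by auto
  have "n \<noteq> 0" using v by auto
  then have fin: "finite ((\<lambda>j. \<bar>v $ j\<bar>) ` {0..<n})" "(\<lambda>j. \<bar>v $ j\<bar>) ` {0..<n} \<noteq> {}" by auto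
  obtain i where i: "i < n" "\<bar>v $ i\<bar> = Max ((\<lambda>j. \<bar>v $ j\<bar>) ` {0..<n})"
    using Max_in[OF fin] by auto
  have max: "\<And>j. j < n \<Longrightarrow> \<bar>v $ j\<bar> \<le> \<bar>v $ i\<bar>"
    using Max_ge[OF fin(1)] i by auto
  have "v $ i \<noteq> 0"
  proof
    assume "v $ i = 0"
    then have "v = 0\<^sub>v n" using max v(1) by (intro eq_vecI) force+
    with v(2) show False by simp
  qed
  have "(\<Sum>j\<in>{0..<n}. M $$ (i,j) * v $ j) = 0"
    using arg_cong[OF v(3), of "\<lambda>w. w $ i"] M v(1) i by (simp add: scalar_prod_def)
  moreover have "(\<Sum>j\<in>{0..<n}. M $$ (i,j) * v $ j) =
      M $$ (i,i) * v $ i + (\<Sum>j\<in>{0..<n}-{i}. M $$ (i,j) * v $ j)"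
    using i by (subst sum.remove[of _ i]) auto
  ultimately have "\<bar>M $$ (i,i) * v $ i\<bar> = \<bar>\<Sum>j\<in>{0..<n}-{i}. M $$ (i,j) * v $ j\<bar>"
    by linarith
  also have "\<dots> \<le> (\<Sum>j\<in>{0..<n}-{i}. \<bar>M $$ (i,j)\<bar> * \<bar>v $ i\<bar>)"
    by (rule order_trans[OF sum_abs sum_mono]) (auto simp: abs_mult intro!: mult_left_mono max)
  also have "\<dots> < \<bar>M $$ (i,i)\<bar> * \<bar>v $ i\<bar>"
    unfolding sum_distrib_right[symmetric] using dominant[OF i(1)] \<open>v $ i \<noteq> 0\<close>
    by (intro mult_strict_right_mono) auto
  finally show False by (simp add: abs_mult)
qed

definition scale_off_diag :: "real \<Rightarrow> real mat \<Rightarrow> real mat" where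
  "scale_off_diag s R = mat (dim_row R) (dim_col R) (\<lambda>(i,j). if i = j then R $$ (i,j) else s * R $$ (i,j))"

lemma continuous_det_scale_off_diag:
  assumes R: "R \<in> carrier_mat n n"
  shows "isCont (\<lambda>s. det (scale_off_diag s R)) s"
proof -
  have carrier: "scale_off_diag s R \<in> carrier_mat n n" for s using R by (simp add: scale_off_diag_def)
  have "det (scale_off_diag s R) = (\<Sum>p\<in>{p. p permutes {0..<n}}. of_int (sign p) *
      (\<Prod>i\<in>{0..<n}. if i = p i then R $$ (i, p i) else s * R $$ (i, p i)))" for s
    unfolding det_def'[OF carrier] using R
    by (auto simp: scale_off_diag_def permutes_in_image intro!: sum.cong prod.cong)
  then show ?thesis
  proof (simp only:, intro continuous_intros)
    fix p i
    show "isCont (\<lambda>x. if i = p i then R $$ (i, p i) else x * R $$ (i, p i)) s"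
      by (cases "i = p i") (auto intro!: continuous_intros)
  qed
qed

text \<open>If the diagonal is nonzero, scaling the off-diagonal entries by \<open>s \<in> [0,1)\<close> gives strictly
  dominant matrices, so the determinant does not vanish for these \<open>s\<close> and, by continuity, \<open>det R\<close>
  is zero or has the sign of the diagonal product.\<close>

lemma diag_prod_mult_det_nonneg_if_diag_dominant:
  fixes R :: "real mat"
  assumes R: "R \<in> carrier_mat n n"
    and dominant: "\<And>i. i < n \<Longrightarrow> (\<Sum>j\<in>{0..<n}-{i}. \<bar>R $$ (i,j)\<bar>) \<le> \<bar>R $$ (i,i)\<bar>"
  shows "0 \<le> (\<Prod>i\<in>{0..<n}. R $$ (i,i)) * det R"
proof (rule ccontr)
  define c where "c = (\<Prod>i\<in>{0..<n}. R $$ (i,i))"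
  define g where "g s = c * det (scale_off_diag s R)" for s
  assume "\<not> 0 \<le> (\<Prod>i\<in>{0..<n}. R $$ (i,i)) * det R"
  moreover have "scale_off_diag 1 R = R"
    using R by (intro eq_matI) (auto simp: scale_off_diag_def)
  ultimately have g1: "g 1 < 0" unfolding g_def c_def by simp
  then have "c \<noteq> 0" unfolding g_def by auto
  then have diag: "R $$ (i,i) \<noteq> 0" if "i < n" for i
    using that unfolding c_def by auto
  have "det (scale_off_diag 0 R) = c"
    using R unfolding c_def
    by (subst det_upper_triangular) (auto simp: scale_off_diag_def upper_triangular_def
        diag_mat_def prod.distinct_set_conv_list[symmetric] intro!: prod.cong)
  then have g0: "0 \<le> g 0" unfolding g_def by simp
  obtain s where s: "0 \<le> s" "s \<le> 1" "g s = 0"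
    using IVT2[of g 1 0 0] g0 g1 continuous_det_scale_off_diag[OF R]
    unfolding g_def by (auto intro: continuous_intros)
  have "s < 1" using s g1 by (cases "s = 1") auto
  have "det (scale_off_diag s R) \<noteq> 0"
  proof (rule det_nonzero_if_strictly_diag_dominant)
    show "scale_off_diag s R \<in> carrier_mat n n" using R by (simp add: scale_off_diag_def)
    fix i assume i: "i < n"
    have "(\<Sum>j\<in>{0..<n}-{i}. \<bar>scale_off_diag s R $$ (i,j)\<bar>) = s * (\<Sum>j\<in>{0..<n}-{i}. \<bar>R $$ (i,j)\<bar>)"
      using R i s(1) by (auto simp: scale_off_diag_def abs_mult sum_distrib_left intro!: sum.cong)
    also have "\<dots> \<le> s * \<bar>R $$ (i,i)\<bar>"
      using dominant[OF i] s(1) by (rule mult_left_mono)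
    also have "\<dots> < \<bar>R $$ (i,i)\<bar>"
      using diag[OF i] \<open>s < 1\<close> by simp
    finally show "(\<Sum>j\<in>{0..<n}-{i}. \<bar>scale_off_diag s R $$ (i,j)\<bar>) < \<bar>scale_off_diag s R $$ (i,i)\<bar>"
      using R i by (simp add: scale_off_diag_def)
  qed
  with s(3) g1 show False unfolding g_def by auto
qed

section \<open>Determinants of signed incidence products\<close>

text \<open>Maps \<open>{0..<p} \<rightarrow> {0..<q}\<close>, normalized to the identity elsewhere as in
  \<open>det_linear_rows_sum\<close>.\<close>

definition index_maps :: "nat \<Rightarrow> nat \<Rightarrow> (nat \<Rightarrow> nat) set" where
  "index_maps p q = {f. (\<forall>i\<in>{0..<p}. f i \<in> {0..<q}) \<and> (\<forall>i. i \<notin> {0..<p} \<longrightarrow> f i = i)}"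

lemma finite_index_maps: "finite (index_maps p q)"
  unfolding index_maps_def by (rule finite_bounded_functions) auto

text \<open>Multilinearity of the determinant in the rows of \<open>(X * Y)\<^sup>T = Y\<^sup>T * X\<^sup>T\<close>.\<close>

lemma det_mult_eq_sum_index_maps:
  fixes X Y :: "real mat"
  assumes X: "X \<in> carrier_mat p q" and Y: "Y \<in> carrier_mat q p"
  shows "det (X * Y) =
    (\<Sum>f\<in>index_maps p q. (\<Prod>i\<in>{0..<p}. Y $$ (f i, i)) * det (mat\<^sub>r p p (\<lambda>i. col X (f i))))"
proof -
  have XY: "X * Y \<in> carrier_mat p p" using X Y by auto
  have YT: "transpose_mat Y \<in> carrier_mat p q" and XT: "transpose_mat X \<in> carrier_mat q p"
    using X Y by auto
  have "det (X * Y) = det (transpose_mat (X * Y))" by (rule det_transpose[OF XY, symmetric])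
  also have "transpose_mat (X * Y) = transpose_mat Y * transpose_mat X" by (rule transpose_mult[OF X Y])
  also have "\<dots> = mat\<^sub>r p p (\<lambda>i. finsum_vec TYPE(real) p
      (\<lambda>k. transpose_mat Y $$ (i,k) \<cdot>\<^sub>v row (transpose_mat X) k) {0..<q})"
    by (rule mat_mul_finsum_alt[OF YT XT])
  also have "det \<dots> = (\<Sum>f\<in>index_maps p q.
      det (mat\<^sub>r p p (\<lambda>i. transpose_mat Y $$ (i, f i) \<cdot>\<^sub>v row (transpose_mat X) (f i))))"
    unfolding index_maps_def by (rule det_linear_rows_sum) (use XT in auto)
  also have "\<dots> = (\<Sum>f\<in>index_maps p q.
      (\<Prod>i\<in>{0..<p}. Y $$ (f i, i)) * det (mat\<^sub>r p p (\<lambda>i. col X (f i))))"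
  proof (rule sum.cong[OF refl])
    fix f assume "f \<in> index_maps p q"
    then have f: "\<And>i. i < p \<Longrightarrow> f i < q" unfolding index_maps_def by auto
    have "det (mat\<^sub>r p p (\<lambda>i. transpose_mat Y $$ (i, f i) \<cdot>\<^sub>v row (transpose_mat X) (f i))) =
        prod (\<lambda>i. transpose_mat Y $$ (i, f i)) {0..<p} * det (mat\<^sub>r p p (\<lambda>i. row (transpose_mat X) (f i)))"
      by (rule det_rows_mul) (use X f in \<open>intro Pi_I, subst row_transpose, auto\<close>)
    also have "prod (\<lambda>i. transpose_mat Y $$ (i, f i)) {0..<p} = (\<Prod>i\<in>{0..<p}. Y $$ (f i, i))"
      using Y f by (intro prod.cong) auto
    also have "mat\<^sub>r p p (\<lambda>i. row (transpose_mat X) (f i)) = mat\<^sub>r p p (\<lambda>i. col X (f i))"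
      using X f by (intro eq_matI) auto
    finally show "det (mat\<^sub>r p p (\<lambda>i. transpose_mat Y $$ (i, f i) \<cdot>\<^sub>v row (transpose_mat X) (f i))) =
        (\<Prod>i\<in>{0..<p}. Y $$ (f i, i)) * det (mat\<^sub>r p p (\<lambda>i. col X (f i)))" .
  qed
  finally show ?thesis .
qed

definition signed_incidence :: "real mat \<Rightarrow> bool" where
  "signed_incidence X \<longleftrightarrow>
     (\<forall>i < dim_row X. \<forall>k < dim_col X. X $$ (i,k) \<in> {0, 1, -1}) \<and>
     (\<forall>k < dim_col X. card {i. i < dim_row X \<and> X $$ (i,k) \<noteq> 0} \<le> 2)"

lemma in_Q0_transpose_iff:
  "in_Q0 Y (transpose_mat X) \<longleftrightarrow> Y \<in> carrier_mat (dim_col X) (dim_row X) \<and>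
     (\<forall>k < dim_col X. \<forall>i < dim_row X. sgn (Y $$ (k,i)) \<in> {0, sgn (X $$ (i,k))})"
  unfolding in_Q0_def carrier_mat_def by simp

lemma in_Q0_transpose_swap: "in_Q0 Y (transpose_mat X) \<longleftrightarrow> in_Q0 (transpose_mat Y) X"
proof -
  have "in_Q0 (transpose_mat Y) X \<longleftrightarrow> dim_row Y = dim_col X \<and> dim_col Y = dim_row X \<and>
     (\<forall>i < dim_row X. \<forall>k < dim_col X. sgn (Y $$ (k,i)) \<in> {0, sgn (X $$ (i,k))})"
    unfolding in_Q0_def by auto blast+
  then show ?thesis unfolding in_Q0_transpose_iff carrier_mat_def by blast
qed

lemma signed_incidence_col_off_diag_le:
  assumes X: "signed_incidence X" and k: "k < dim_col X" and i: "i < dim_row X"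
    and nz: "X $$ (i,k) \<noteq> 0"
  shows "(\<Sum>j\<in>{0..<dim_row X}-{i}. \<bar>X $$ (j,k)\<bar>) \<le> \<bar>X $$ (i,k)\<bar>"
proof -
  define S where "S = {j. j < dim_row X \<and> X $$ (j,k) \<noteq> 0}"
  have unit: "\<bar>X $$ (j,k)\<bar> = 1" if "j \<in> S" for j
  proof -
    have "X $$ (j,k) \<in> {0, 1, -1}" "X $$ (j,k) \<noteq> 0"
      using X k that unfolding signed_incidence_def S_def by auto
    then show ?thesis by auto
  qed
  have "card S \<le> 2" using X k unfolding signed_incidence_def S_def by blast
  have "(\<Sum>j\<in>{0..<dim_row X}-{i}. \<bar>X $$ (j,k)\<bar>) = (\<Sum>j\<in>S-{i}. \<bar>X $$ (j,k)\<bar>)"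
    by (rule sum.mono_neutral_right) (auto simp: S_def)
  also have "\<dots> = real (card S - 1)"
    using unit i nz by (simp add: S_def card_Diff_singleton)
  also have "\<dots> \<le> 1"
    using \<open>card S \<le> 2\<close> by linarith
  also have "1 = \<bar>X $$ (i,k)\<bar>" using unit i nz by (simp add: S_def)
  finally show ?thesis .
qed

text \<open>The matrix of a term has the columns \<open>f i\<close> of \<open>X\<close> as rows, so it is diagonally
  dominant, and the sign of the coefficient is that of its diagonal product.\<close>

lemma det_expansion_term_nonneg:
  assumes X: "signed_incidence X" "X \<in> carrier_mat p q"
    and Y: "in_Q0 Y (transpose_mat X)" and f: "f \<in> index_maps p q"
  shows "0 \<le> (\<Prod>i\<in>{0..<p}. Y $$ (f i, i)) * det (mat\<^sub>r p p (\<lambda>i. col X (f i)))"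
proof (cases "\<exists>i<p. Y $$ (f i, i) = 0")
  case True
  then have "(\<Prod>i\<in>{0..<p}. Y $$ (f i, i)) = 0" by (auto simp: prod_zero_iff)
  then show ?thesis by (metis mult_zero_left order_refl)
next
  case False
  have fi: "\<And>i. i < p \<Longrightarrow> f i < q" using f unfolding index_maps_def by auto
  define R where "R = mat\<^sub>r p p (\<lambda>i. col X (f i))"
  have R: "R \<in> carrier_mat p p" unfolding R_def by auto
  have Rij: "R $$ (i,j) = X $$ (j, f i)" if "i < p" "j < p" for i j
    unfolding R_def using X(2) fi that by auto
  have sgn_Y: "sgn (Y $$ (f i, i)) = sgn (R $$ (i,i))" and R_unit: "R $$ (i,i) \<in> {1, -1}"
    if i: "i < p" for i
  proof -
    have "sgn (Y $$ (f i, i)) \<in> {0, sgn (X $$ (i, f i))}"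
      using Y fi[OF i] i X(2) unfolding in_Q0_transpose_iff by auto
    moreover have "X $$ (i, f i) \<in> {0, 1, -1}"
      using X fi[OF i] i unfolding signed_incidence_def by auto
    ultimately have "sgn (Y $$ (f i, i)) \<in> {0, sgn (R $$ (i,i))}" "R $$ (i,i) \<in> {0, 1, -1}"
      using i by (simp_all add: Rij)
    then show "sgn (Y $$ (f i, i)) = sgn (R $$ (i,i))" "R $$ (i,i) \<in> {1, -1}"
      using False i by (auto simp: sgn_0_0)
  qed
  have "(\<Prod>i\<in>{0..<p}. Y $$ (f i, i)) = (\<Prod>i\<in>{0..<p}. \<bar>Y $$ (f i, i)\<bar>) * (\<Prod>i\<in>{0..<p}. R $$ (i,i))"
    unfolding prod.distrib[symmetric]
  proof (rule prod.cong[OF refl])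
    fix i assume "i \<in> {0..<p}"
    then have "sgn (Y $$ (f i, i)) = R $$ (i,i)" using sgn_Y[of i] R_unit[of i] by auto
    then show "Y $$ (f i, i) = \<bar>Y $$ (f i, i)\<bar> * R $$ (i,i)" by (metis mult.commute sgn_mult_abs)
  qed
  moreover have "0 \<le> (\<Prod>i\<in>{0..<p}. R $$ (i,i)) * det R"
  proof (rule diag_prod_mult_det_nonneg_if_diag_dominant[OF R])
    fix i assume i: "i < p"
    have "(\<Sum>j\<in>{0..<p}-{i}. \<bar>R $$ (i,j)\<bar>) = (\<Sum>j\<in>{0..<p}-{i}. \<bar>X $$ (j, f i)\<bar>)"
      using i by (intro sum.cong) (auto simp: Rij)
    also have "\<dots> \<le> \<bar>X $$ (i, f i)\<bar>"
      using signed_incidence_col_off_diag_le[OF X(1), of "f i" i] X(2) fi[OF i] R_unit[OF i] i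
      by (auto simp: Rij)
    finally show "(\<Sum>j\<in>{0..<p}-{i}. \<bar>R $$ (i,j)\<bar>) \<le> \<bar>R $$ (i,i)\<bar>" using i by (simp add: Rij)
  qed
  ultimately show ?thesis unfolding R_def[symmetric]
    by (simp add: mult.assoc prod_nonneg)
qed

lemma det_mult_nonneg_if_signed_incidence:
  assumes X: "signed_incidence X" and Y: "in_Q0 Y (transpose_mat X)"
  shows "0 \<le> det (X * Y)"
proof -
  have XC: "X \<in> carrier_mat (dim_row X) (dim_col X)" by simp
  have YC: "Y \<in> carrier_mat (dim_col X) (dim_row X)"
    using Y by (simp add: in_Q0_transpose_iff)
  show ?thesis
    unfolding det_mult_eq_sum_index_maps[OF XC YC]
    by (intro sum_nonneg det_expansion_term_nonneg[OF X XC Y])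
qed

lemma inj_on_pick: "inj_on (pick I) {..<card {i. i < N \<and> i \<in> I}}"
proof (rule inj_onI)
  let ?S = "{i. i < N \<and> i \<in> I}"
  have reduce: "pick I x = pick ?S x" if "x \<in> {..<card ?S}" for x
    using that by (intro pick_reduce_set) simp
  have mono: "pick ?S x < pick ?S y" if "x < y" "y \<in> {..<card ?S}" for x y
    using pick_mono_le[of y ?S x] that by simp
  fix a b assume a: "a \<in> {..<card ?S}" and b: "b \<in> {..<card ?S}" and eq: "pick I a = pick I b"
  show "a = b"
  proof (rule ccontr)
    assume "a \<noteq> b"
    then consider "a < b" | "b < a" by linarith
    then show False
      using mono[of a b, OF _ b] mono[of b a, OF _ a] eq reduce[OF a] reduce[OF b] by cases auto
  qed
qed

lemma transpose_submatrix: "transpose_mat (submatrix M I J) = submatrix (transpose_mat M) J I"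
  by (intro eq_matI) (auto simp: dim_submatrix submatrix_index pick_le)

lemma submatrix_mult:
  assumes "dim_col X = dim_row Y"
  shows "submatrix (X * Y) I J = submatrix X I UNIV * submatrix Y UNIV J"
proof (rule eq_matI)
  fix i j assume "i < dim_row (submatrix X I UNIV * submatrix Y UNIV J)"
    and "j < dim_col (submatrix X I UNIV * submatrix Y UNIV J)"
  then have i: "i < card {a. a < dim_row X \<and> a \<in> I}" and j: "j < card {a. a < dim_col Y \<and> a \<in> J}"
    by (auto simp: dim_submatrix)
  then show "submatrix (X * Y) I J $$ (i,j) = (submatrix X I UNIV * submatrix Y UNIV J) $$ (i,j)"
    using assms pick_le[OF i] pick_le[OF j]
    by (auto simp: dim_submatrix submatrix_index pick_UNIV scalar_prod_def intro!: sum.cong)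
qed (auto simp: dim_submatrix assms)

lemma in_Q0_submatrix:
  assumes "in_Q0 Y M"
  shows "in_Q0 (submatrix Y I J) (submatrix M I J)"
  using assms unfolding in_Q0_def by (auto simp: dim_submatrix submatrix_index pick_le)

lemma signed_incidence_submatrix:
  assumes X: "signed_incidence X"
  shows "signed_incidence (submatrix X I J)"
  unfolding signed_incidence_def
proof (intro conjI allI impI)
  fix i k assume "i < dim_row (submatrix X I J)" "k < dim_col (submatrix X I J)"
  then show "submatrix X I J $$ (i,k) \<in> {0, 1, -1}"
    using X by (auto simp: signed_incidence_def dim_submatrix submatrix_index pick_le)
next
  fix k assume "k < dim_col (submatrix X I J)"
  then have k: "k < card {a. a < dim_col X \<and> a \<in> J}" by (simp add: dim_submatrix)
  let ?rows = "{i. i < dim_row (submatrix X I J) \<and> submatrix X I J $$ (i,k) \<noteq> 0}"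
  have "card ?rows \<le> card {i. i < dim_row X \<and> X $$ (i, pick J k) \<noteq> 0}"
  proof (rule card_inj_on_le)
    show "inj_on (pick I) ?rows"
      by (rule inj_on_subset[OF inj_on_pick]) (auto simp: dim_submatrix)
    show "pick I ` ?rows \<subseteq> {i. i < dim_row X \<and> X $$ (i, pick J k) \<noteq> 0}"
      using k by (auto simp: dim_submatrix submatrix_index pick_le)
  qed auto
  also have "\<dots> \<le> 2" using X pick_le[OF k] by (simp add: signed_incidence_def)
  finally show "card ?rows \<le> 2" .
qed

lemma P0_matrix_mult_if_signed_incidence:
  assumes X: "signed_incidence X" and Y: "in_Q0 Y (transpose_mat X)"
  shows "P0_matrix (X * Y)"
  unfolding P0_matrix_def
proof (intro conjI allI impI)
  have dims: "dim_row Y = dim_col X" "dim_col Y = dim_row X"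
    using Y by (auto simp: in_Q0_transpose_iff)
  then show "dim_row (X * Y) = dim_col (X * Y)" by simp
  fix I
  have "in_Q0 (submatrix Y UNIV I) (transpose_mat (submatrix X I UNIV))"
    unfolding transpose_submatrix using in_Q0_submatrix[OF Y] .
  then have "0 \<le> det (submatrix X I UNIV * submatrix Y UNIV I)"
    by (rule det_mult_nonneg_if_signed_incidence[OF signed_incidence_submatrix[OF X]])
  then show "0 \<le> det (submatrix (X * Y) I I)"
    using dims by (simp add: submatrix_mult)
qed

lemma signed_incidence_append_identity:
  assumes X: "signed_incidence X" "X \<in> carrier_mat p q"
  shows "signed_incidence (four_block_mat X (1\<^sub>m p) (0\<^sub>m 0 q) (0\<^sub>m 0 p))"
  unfolding signed_incidence_def
proof (intro conjI allI impI)
  let ?X = "four_block_mat X (1\<^sub>m p) (0\<^sub>m 0 q) (0\<^sub>m 0 p)"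
  fix i k assume "i < dim_row ?X" "k < dim_col ?X"
  then show "?X $$ (i,k) \<in> {0, 1, -1}" using X by (auto simp: signed_incidence_def)
next
  let ?X = "four_block_mat X (1\<^sub>m p) (0\<^sub>m 0 q) (0\<^sub>m 0 p)"
  fix k assume k: "k < dim_col ?X"
  show "card {i. i < dim_row ?X \<and> ?X $$ (i,k) \<noteq> 0} \<le> 2"
  proof (cases "k < q")
    case True
    then have "{i. i < dim_row ?X \<and> ?X $$ (i,k) \<noteq> 0} = {i. i < dim_row X \<and> X $$ (i,k) \<noteq> 0}"
      using X(2) by auto
    then show ?thesis using X True by (simp add: signed_incidence_def)
  next
    case False
    then have "{i. i < dim_row ?X \<and> ?X $$ (i,k) \<noteq> 0} \<subseteq> {k - q}"
      using X(2) k by (auto split: if_splits)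
    then have "card {i. i < dim_row ?X \<and> ?X $$ (i,k) \<noteq> 0} \<le> card {k - q}"
      by (intro card_mono) auto
    then show ?thesis by simp
  qed
qed

lemma in_Q0_append_smult_identity:
  assumes Y: "in_Q0 Y (transpose_mat X)" and X: "X \<in> carrier_mat p q" and t: "0 \<le> t"
  shows "in_Q0 (four_block_mat Y (0\<^sub>m q 0) (t \<cdot>\<^sub>m 1\<^sub>m p) (0\<^sub>m p 0))
    (transpose_mat (four_block_mat X (1\<^sub>m p) (0\<^sub>m 0 q) (0\<^sub>m 0 p)))"
  unfolding in_Q0_transpose_iff
proof (intro conjI allI impI)
  let ?X = "four_block_mat X (1\<^sub>m p) (0\<^sub>m 0 q) (0\<^sub>m 0 p)"
    and ?Y = "four_block_mat Y (0\<^sub>m q 0) (t \<cdot>\<^sub>m 1\<^sub>m p) (0\<^sub>m p 0)"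
  have YC: "Y \<in> carrier_mat q p" using Y X by (simp add: in_Q0_transpose_iff)
  then show "?Y \<in> carrier_mat (dim_col ?X) (dim_row ?X)" using X by auto
  fix k i assume "k < dim_col ?X" "i < dim_row ?X"
  then have k: "k < q + p" and i: "i < p" using X by auto
  show "sgn (?Y $$ (k,i)) \<in> {0, sgn (?X $$ (i,k))}"
  proof (cases "k < q")
    case True
    then show ?thesis using Y X YC i by (simp add: in_Q0_transpose_iff)
  next
    case False
    then show ?thesis using X YC k i t by (auto simp: sgn_if)
  qed
qed

text \<open>\<open>X * Y + t I = [X I] * [Y; t I]\<close>, and in the expansion of the right-hand side the term
  selecting the identity block equals \<open>t\<^sup>p\<close>.\<close>

lemma det_mult_plus_smult_one_pos:
  assumes X: "signed_incidence X" and Y: "in_Q0 Y (transpose_mat X)" and t: "0 < t"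
  shows "0 < det (X * Y + t \<cdot>\<^sub>m 1\<^sub>m (dim_row X))"
proof -
  define p q where "p = dim_row X" and "q = dim_col X"
  have XC: "X \<in> carrier_mat p q" unfolding p_def q_def by simp
  have YC: "Y \<in> carrier_mat q p" using Y unfolding p_def q_def by (simp add: in_Q0_transpose_iff)
  let ?X = "four_block_mat X (1\<^sub>m p) (0\<^sub>m 0 q) (0\<^sub>m 0 p)"
    and ?Y = "four_block_mat Y (0\<^sub>m q 0) (t \<cdot>\<^sub>m 1\<^sub>m p) (0\<^sub>m p 0)"
  have X'C: "?X \<in> carrier_mat p (q + p)" and Y'C: "?Y \<in> carrier_mat (q + p) p"
    using XC YC by auto
  have "?X * ?Y = four_block_mat (X * Y + 1\<^sub>m p * (t \<cdot>\<^sub>m 1\<^sub>m p)) (X * 0\<^sub>m q 0 + 1\<^sub>m p * 0\<^sub>m p 0)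
      (0\<^sub>m 0 q * Y + 0\<^sub>m 0 p * (t \<cdot>\<^sub>m 1\<^sub>m p)) (0\<^sub>m 0 q * 0\<^sub>m q 0 + 0\<^sub>m 0 p * 0\<^sub>m p 0)"
    by (rule mult_four_block_mat) (use XC YC in auto)
  also have "\<dots> = X * Y + t \<cdot>\<^sub>m 1\<^sub>m p" using XC YC by (intro eq_matI) auto
  finally have prod: "?X * ?Y = X * Y + t \<cdot>\<^sub>m 1\<^sub>m p" .
  define f0 where "f0 i = (if i < p then q + i else i)" for i
  have f0: "f0 \<in> index_maps p (q + p)" unfolding index_maps_def f0_def by auto
  have "t ^ p = (\<Prod>i\<in>{0..<p}. ?Y $$ (f0 i, i)) * det (mat\<^sub>r p p (\<lambda>i. col ?X (f0 i)))"
  proof -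
    have "mat\<^sub>r p p (\<lambda>i. col ?X (f0 i)) = 1\<^sub>m p" using XC by (intro eq_matI) (auto simp: f0_def)
    moreover have "(\<Prod>i\<in>{0..<p}. ?Y $$ (f0 i, i)) = (\<Prod>i\<in>{0..<p}. t)"
      using YC by (intro prod.cong) (auto simp: f0_def)
    ultimately show ?thesis by simp
  qed
  also have "\<dots> \<le> det (?X * ?Y)"
    unfolding det_mult_eq_sum_index_maps[OF X'C Y'C]
    using signed_incidence_append_identity[OF X XC] in_Q0_append_smult_identity[OF Y XC] t X'C
    by (intro member_le_sum[OF f0 _ finite_index_maps] det_expansion_term_nonneg) auto
  finally have "t ^ p \<le> det (X * Y + t \<cdot>\<^sub>m 1\<^sub>m p)" by (simp only: prod)
  moreover have "0 < t ^ p" using t by simp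
  ultimately show ?thesis by (simp add: p_def)
qed

section \<open>The second additive compound of a product\<close>

lemma set_wedge_pairs: "set (wedge_pairs n) = {(i,j). i < j \<and> j < n}"
  unfolding wedge_pairs_def by (auto simp: image_iff)

lemma distinct_wedge_pairs: "distinct (wedge_pairs n)"
proof -
  let ?row = "\<lambda>i. map (Pair i) [Suc i..<n]"
  have "inj_on ?row {0..<n}"
  proof (rule inj_onI)
    fix x y assume "x \<in> {0..<n}" "y \<in> {0..<n}" and eq: "?row x = ?row y"
    show "x = y"
    proof (cases "Suc x < n")
      case True
      then have "(x, Suc x) \<in> set (?row y)" unfolding eq[symmetric] by simp
      then show ?thesis by auto
    next
      case False
      then have "?row y = []" using eq by simp
      then have "\<not> Suc y < n" by auto
      with False \<open>x \<in> {0..<n}\<close> \<open>y \<in> {0..<n}\<close> show ?thesis by auto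
    qed
  qed
  then show ?thesis
    unfolding wedge_pairs_def by (intro distinct_concat) (auto simp: distinct_map inj_on_def)
qed

lemma wedge_pairs_nth:
  assumes "a < length (wedge_pairs n)"
  shows "fst (wedge_pairs n ! a) < snd (wedge_pairs n ! a)" "snd (wedge_pairs n ! a) < n"
  using nth_mem[OF assms] unfolding set_wedge_pairs by auto

lemma sum_index_mult_split:
  fixes q n :: nat
  shows "(\<Sum>c\<in>{0..<q*n}. g c) = (\<Sum>k\<in>{0..<q}. \<Sum>l\<in>{0..<n}. g (k*n + l))"
proof (induction q)
  case (Suc q)
  have "{0..<Suc q * n} = {0..<q*n} \<union> {q*n..<q*n + n}" by auto
  then have "(\<Sum>c\<in>{0..<Suc q * n}. g c) = (\<Sum>c\<in>{0..<q*n}. g c) + (\<Sum>c\<in>{q*n..<q*n + n}. g c)"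
    by (simp add: sum.union_disjoint ivl_disj_int)
  also have "(\<Sum>c\<in>{q*n..<q*n + n}. g c) = (\<Sum>l\<in>{0..<n}. g (q*n + l))"
    using sum.shift_bounds_nat_ivl[of g 0 "q*n" n] by (simp add: add.commute)
  finally show ?case using Suc by simp
qed simp

lemma sum_if_const_cond: "(\<Sum>k\<in>A. if c then f k else 0) = (if c then sum f A else (0::'a::comm_monoid_add))"
  by (cases c) simp_all

lemma sum_if_eq_mult_if_eq:
  fixes a b :: "'a::semiring_0" and j n l' :: nat
  assumes "j < n"
  shows "(\<Sum>l\<in>{0..<n}. (if j = l then a else 0) * (if l' = l then b else 0)) = (if l' = j then a * b else 0)"
proof -
  have "(\<Sum>l\<in>{0..<n}. (if j = l then a else 0) * (if l' = l then b else 0)) =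
      (\<Sum>l\<in>{0..<n}. if l = j then (if l' = j then a * b else 0) else 0)"
    by (intro sum.cong) auto
  also have "\<dots> = (if l' = j then a * b else 0)"
    using assms by (cases "l' = j") (simp_all add: sum.delta)
  finally show ?thesis .
qed

lemma sum_wedge_coeff_mult:
  fixes xi xj yk yl :: "'a::comm_ring_1" and i j n k' l' :: nat
  assumes "i < n" "j < n"
  shows "(\<Sum>l\<in>{0..<n}. ((if j = l then xi else 0) - (if i = l then xj else 0)) *
      ((if l' = l then yk else 0) - (if k' = l then yl else 0))) =
    (if l' = j then xi * yk else 0) - (if k' = j then xi * yl else 0)
      - (if l' = i then xj * yk else 0) + (if k' = i then xj * yl else 0)"
proof -
  have "\<And>l. ((if j = l then xi else 0) - (if i = l then xj else 0)) *
      ((if l' = l then yk else 0) - (if k' = l then yl else 0)) =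
    (if j = l then xi else 0) * (if l' = l then yk else 0) - (if j = l then xi else 0) * (if k' = l then yl else 0)
      - (if i = l then xj else 0) * (if l' = l then yk else 0) + (if i = l then xj else 0) * (if k' = l then yl else 0)"
    by (simp add: algebra_simps)
  then show ?thesis
    using assms by (simp only: sum.distrib sum_subtractf sum_if_eq_mult_if_eq)
qed

text \<open>Column \<open>k * n + l\<close> of \<open>wedge_factor n X\<close> holds the coordinates of \<open>X e\<^sub>k \<and> e\<^sub>l\<close>.\<close>

definition wedge_factor :: "nat \<Rightarrow> real mat \<Rightarrow> real mat" where
  "wedge_factor n X = mat (length (wedge_pairs n)) (dim_col X * n) (\<lambda>(a,c).
     case wedge_pairs n ! a of (i,j) \<Rightarrow>
       (if j = c mod n then X $$ (i, c div n) else 0) - (if i = c mod n then X $$ (j, c div n) else 0))"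

lemma dim_wedge_factor [simp]:
  "dim_row (wedge_factor n X) = length (wedge_pairs n)"
  "dim_col (wedge_factor n X) = dim_col X * n"
  by (simp_all add: wedge_factor_def)

lemma wedge_factor_index:
  assumes "a < length (wedge_pairs n)" "c < dim_col X * n" "wedge_pairs n ! a = (i,j)"
  shows "wedge_factor n X $$ (a,c) =
    (if j = c mod n then X $$ (i, c div n) else 0) - (if i = c mod n then X $$ (j, c div n) else 0)"
  using assms by (simp add: wedge_factor_def)

lemma div_mod_less_of_less_mult:
  fixes c :: nat
  assumes "c < q * n"
  shows "c div n < q" "c mod n < n"
proof -
  show "c div n < q" using assms less_mult_imp_div_less[of c q n] by (simp add: mult.commute)
  have "n \<noteq> 0" using assms by (cases n) auto
  then show "c mod n < n" by simp
qed

lemma compound2_mult: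
  assumes X: "X \<in> carrier_mat n q" and Y: "Y \<in> carrier_mat q n"
  shows "compound2 (X * Y) = wedge_factor n X * transpose_mat (wedge_factor n (transpose_mat Y))"
    (is "_ = ?W * ?V")
proof (rule eq_matI)
  let ?ps = "wedge_pairs n" and ?x = "\<lambda>r k. X $$ (r,k)" and ?y = "\<lambda>k r. Y $$ (k,r)"
  have dim: "dim_row (X * Y) = n" using X by simp
  show "dim_row (compound2 (X * Y)) = dim_row (?W * ?V)" "dim_col (compound2 (X * Y)) = dim_col (?W * ?V)"
    unfolding compound2_def Let_def dim by auto
  fix a b assume "a < dim_row (?W * ?V)" "b < dim_col (?W * ?V)"
  then have a: "a < length ?ps" and b: "b < length ?ps" by auto
  obtain i j k' l' where ij: "?ps ! a = (i,j)" and kl: "?ps ! b = (k',l')" by force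
  have ijn: "i < j" "j < n" and kln: "k' < l'" "l' < n"
    using wedge_pairs_nth[OF a] wedge_pairs_nth[OF b] ij kl by auto
  have "(?W * ?V) $$ (a,b) = (\<Sum>c\<in>{0..<q*n}. ?W $$ (a,c) * ?V $$ (c,b))"
    using a b X Y by (simp add: scalar_prod_def)
  also have "\<dots> = (\<Sum>k\<in>{0..<q}. \<Sum>l\<in>{0..<n}. ?W $$ (a, k*n+l) * ?V $$ (k*n+l, b))"
    by (rule sum_index_mult_split)
  also have "\<dots> = (\<Sum>k\<in>{0..<q}. \<Sum>l\<in>{0..<n}.
      ((if j = l then ?x i k else 0) - (if i = l then ?x j k else 0)) *
      ((if l' = l then ?y k k' else 0) - (if k' = l then ?y k l' else 0)))"
  proof (intro sum.cong refl)
    fix k l assume k: "k \<in> {0..<q}" and l: "l \<in> {0..<n}"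
    have "k * n + l < q * n" using k l mult_le_mono1[of "Suc k" q n] by simp
    then show "?W $$ (a, k*n+l) * ?V $$ (k*n+l, b) =
        ((if j = l then ?x i k else 0) - (if i = l then ?x j k else 0)) *
        ((if l' = l then ?y k k' else 0) - (if k' = l then ?y k l' else 0))"
      using a b k l X Y ijn kln by (simp add: wedge_factor_index ij kl)
  qed
  also have "\<dots> = (\<Sum>k\<in>{0..<q}.
      (if l' = j then ?x i k * ?y k k' else 0) - (if k' = j then ?x i k * ?y k l' else 0)
      - (if l' = i then ?x j k * ?y k k' else 0) + (if k' = i then ?x j k * ?y k l' else 0))"
    using ijn by (simp only: sum_wedge_coeff_mult)
  also have "\<dots> = (if l' = j then (X * Y) $$ (i,k') else 0) - (if l' = i then (X * Y) $$ (j,k') else 0)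
      + (if k' = i then (X * Y) $$ (j,l') else 0) - (if k' = j then (X * Y) $$ (i,l') else 0)"
    using X Y ijn kln by (simp add: sum.distrib sum_subtractf sum_if_const_cond scalar_prod_def)
  also have "\<dots> = compound2 (X * Y) $$ (a,b)"
    using a b unfolding compound2_def Let_def dim by (simp add: ij kl)
  finally show "compound2 (X * Y) $$ (a,b) = (?W * ?V) $$ (a,b)" by simp
qed

lemma card_nth_distinct:
  assumes "distinct xs"
  shows "card {a. a < length xs \<and> P (xs ! a)} = card {x \<in> set xs. P x}"
proof -
  have "inj_on (nth xs) {a. a < length xs \<and> P (xs ! a)}"
    using assms by (auto simp: inj_on_def nth_eq_iff_index_eq)
  moreover have "nth xs ` {a. a < length xs \<and> P (xs ! a)} = {x \<in> set xs. P x}"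
    by (auto simp: in_set_conv_nth)
  ultimately show ?thesis by (metis card_image)
qed

text \<open>A nonzero entry in column \<open>k * n + l\<close> of the wedge factor sits at the pair \<open>{r, l}\<close>
  for some \<open>r\<close> with \<open>X\<^sub>r\<^sub>k \<noteq> 0\<close>.\<close>

lemma card_wedge_factor_col_le:
  assumes c: "c < dim_col X * n"
  shows "card {a. a < length (wedge_pairs n) \<and> wedge_factor n X $$ (a,c) \<noteq> 0}
    \<le> card {r. r < n \<and> X $$ (r, c div n) \<noteq> 0}"
proof -
  define k l where "k = c div n" and "l = c mod n"
  define P where "P = (\<lambda>(i,j). (if j = l then X $$ (i,k) else 0) - (if i = l then X $$ (j,k) else 0) \<noteq> 0)"
  let ?nz = "{r. r < n \<and> X $$ (r,k) \<noteq> 0}"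
  have "{a. a < length (wedge_pairs n) \<and> wedge_factor n X $$ (a,c) \<noteq> 0} =
      {a. a < length (wedge_pairs n) \<and> P (wedge_pairs n ! a)}"
  proof (intro Collect_cong)
    fix a
    show "(a < length (wedge_pairs n) \<and> wedge_factor n X $$ (a,c) \<noteq> 0) \<longleftrightarrow>
        (a < length (wedge_pairs n) \<and> P (wedge_pairs n ! a))"
    proof (cases "a < length (wedge_pairs n)")
      case True
      obtain i j where ij: "wedge_pairs n ! a = (i,j)" by force
      show ?thesis unfolding wedge_factor_index[OF True c ij] ij P_def k_def l_def using True by simp
    qed simp
  qed
  also have "card \<dots> = card {x \<in> set (wedge_pairs n). P x}"
    by (rule card_nth_distinct[OF distinct_wedge_pairs])
  also have "\<dots> \<le> card ((\<lambda>r. (min r l, max r l)) ` ?nz)"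
  proof (rule card_mono)
    show "{x \<in> set (wedge_pairs n). P x} \<subseteq> (\<lambda>r. (min r l, max r l)) ` ?nz"
    proof
      fix x assume "x \<in> {x \<in> set (wedge_pairs n). P x}"
      then obtain i j where x: "x = (i,j)" "i < j" "j < n" "P (i,j)" unfolding set_wedge_pairs by auto
      show "x \<in> (\<lambda>r. (min r l, max r l)) ` ?nz"
      proof (cases "j = l")
        case True
        then show ?thesis using x by (intro image_eqI[of _ _ i]) (auto simp: P_def)
      next
        case False
        then show ?thesis using x by (intro image_eqI[of _ _ j]) (auto simp: P_def split: if_splits)
      qed
    qed
  qed simp
  also have "\<dots> \<le> card ?nz" by (rule card_image_le) simp
  finally show ?thesis unfolding k_def .
qed

lemma signed_incidence_wedge_factor:
  assumes X: "signed_incidence X" and n: "dim_row X = n"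
  shows "signed_incidence (wedge_factor n X)"
  unfolding signed_incidence_def
proof (intro conjI allI impI)
  fix a c assume "a < dim_row (wedge_factor n X)" "c < dim_col (wedge_factor n X)"
  then have a: "a < length (wedge_pairs n)" and c: "c < dim_col X * n" by auto
  obtain i j where ij: "wedge_pairs n ! a = (i,j)" by force
  have "i < j" "j < n" using wedge_pairs_nth[OF a] ij by auto
  then show "wedge_factor n X $$ (a,c) \<in> {0, 1, -1}"
    using X n div_mod_less_of_less_mult[OF c]
    unfolding wedge_factor_index[OF a c ij] signed_incidence_def by auto
next
  fix c assume "c < dim_col (wedge_factor n X)"
  then have c: "c < dim_col X * n" by simp
  have "card {a. a < dim_row (wedge_factor n X) \<and> wedge_factor n X $$ (a,c) \<noteq> 0}
      \<le> card {r. r < n \<and> X $$ (r, c div n) \<noteq> 0}"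
    using card_wedge_factor_col_le[OF c] by simp
  also have "\<dots> \<le> 2" using X n div_mod_less_of_less_mult[OF c] by (simp add: signed_incidence_def)
  finally show "card {a. a < dim_row (wedge_factor n X) \<and> wedge_factor n X $$ (a,c) \<noteq> 0} \<le> 2" .
qed

lemma in_Q0_wedge_factor:
  assumes Z: "in_Q0 Z X" and n: "dim_row X = n"
  shows "in_Q0 (wedge_factor n Z) (wedge_factor n X)"
  unfolding in_Q0_def
proof (intro conjI allI impI)
  have dims: "dim_row Z = dim_row X" "dim_col Z = dim_col X" using Z by (auto simp: in_Q0_def)
  then show "dim_row (wedge_factor n Z) = dim_row (wedge_factor n X)"
    "dim_col (wedge_factor n Z) = dim_col (wedge_factor n X)" by auto
  fix a c assume "a < dim_row (wedge_factor n X)" "c < dim_col (wedge_factor n X)"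
  then have a: "a < length (wedge_pairs n)" and c: "c < dim_col X * n" by auto
  obtain i j where ij: "wedge_pairs n ! a = (i,j)" by force
  have "i < j" "j < n" using wedge_pairs_nth[OF a] ij by auto
  moreover have cZ: "c < dim_col Z * n" using c dims by simp
  ultimately show "sgn (wedge_factor n Z $$ (a,c)) \<in> {0, sgn (wedge_factor n X $$ (a,c))}"
    using Z n c dims div_mod_less_of_less_mult[OF c]
    unfolding wedge_factor_index[OF a c ij] wedge_factor_index[OF a cZ ij] in_Q0_def
    by (auto simp: sgn_minus)
qed

lemma wedge_factors_of_signed_incidence:
  assumes X: "signed_incidence X" "X \<in> carrier_mat n q" and Y: "in_Q0 Y (transpose_mat X)"
  shows "signed_incidence (wedge_factor n X)"
    and "in_Q0 (transpose_mat (wedge_factor n (transpose_mat Y))) (transpose_mat (wedge_factor n X))"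
proof -
  have n: "dim_row X = n" using X by simp
  show "signed_incidence (wedge_factor n X)" by (rule signed_incidence_wedge_factor[OF X(1) n])
  have "in_Q0 (wedge_factor n (transpose_mat Y)) (wedge_factor n X)"
    using in_Q0_wedge_factor[OF _ n] Y by (simp add: in_Q0_transpose_swap)
  then show "in_Q0 (transpose_mat (wedge_factor n (transpose_mat Y))) (transpose_mat (wedge_factor n X))"
    by (simp add: in_Q0_transpose_swap)
qed

section \<open>Positive semistability\<close>

lemma not_eigenvalue_if_det_shift_nonzero:
  fixes K :: "real mat"
  assumes K: "K \<in> carrier_mat m m" and t: "det (K + t \<cdot>\<^sub>m 1\<^sub>m m) \<noteq> 0"
  shows "\<not> eigenvalue (map_mat complex_of_real K) (complex_of_real (- t))"
proof
  assume ev: "eigenvalue (map_mat complex_of_real K) (complex_of_real (- t))"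
  have "char_matrix (map_mat complex_of_real K) (complex_of_real (- t)) =
      map_mat complex_of_real (K + t \<cdot>\<^sub>m 1\<^sub>m m)"
    using K unfolding char_matrix_def by (intro eq_matI) auto
  then have "complex_of_real (det (K + t \<cdot>\<^sub>m 1\<^sub>m m)) = 0"
    using ev eigenvalue_det[of "map_mat complex_of_real K" m] K by (simp add: of_real_hom.hom_det)
  with t show False by simp
qed

definition wedge_vec :: "nat \<Rightarrow> complex vec \<Rightarrow> complex vec \<Rightarrow> complex vec" where
  "wedge_vec n u v = vec (length (wedge_pairs n))
     (\<lambda>a. case wedge_pairs n ! a of (i,j) \<Rightarrow> u $ i * v $ j - u $ j * v $ i)"

lemma sum_upper_pairs_symmetrize:
  fixes G :: "nat \<Rightarrow> nat \<Rightarrow> 'a::comm_monoid_add"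
  assumes diag: "\<And>k. k < n \<Longrightarrow> G k k = 0"
  shows "(\<Sum>(k,l)\<in>{(k,l). k < l \<and> l < n}. G k l + G l k) = (\<Sum>k\<in>{0..<n}. \<Sum>l\<in>{0..<n}. G k l)"
proof -
  let ?A = "{(k,l). k < l \<and> l < n}" and ?B = "{(k,l). l < k \<and> k < n}" and ?D = "{(k,l). k = l \<and> l < n}"
  have fin: "finite ?A" "finite ?B" "finite ?D"
    by (auto intro: finite_subset[of _ "{0..<n} \<times> {0..<n}"])
  have "(\<Sum>k\<in>{0..<n}. \<Sum>l\<in>{0..<n}. G k l) = (\<Sum>(k,l)\<in>?A \<union> ?B \<union> ?D. G k l)"
    unfolding sum.cartesian_product by (intro sum.cong) auto
  also have "\<dots> = (\<Sum>(k,l)\<in>?A. G k l) + (\<Sum>(k,l)\<in>?B. G k l) + (\<Sum>(k,l)\<in>?D. G k l)"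
    using fin by (subst sum.union_disjoint, auto)+
  also have "(\<Sum>(k,l)\<in>?D. G k l) = 0" using diag by (intro sum.neutral) auto
  also have "(\<Sum>(k,l)\<in>?B. G k l) = (\<Sum>(k,l)\<in>?A. G l k)"
  proof -
    have "(\<Sum>(k,l)\<in>?A. G l k) = (\<Sum>x\<in>prod.swap ` ?A. (\<lambda>(k,l). G k l) x)"
      by (subst sum.reindex) (auto simp: inj_on_def comp_def case_prod_beta)
    also have "prod.swap ` ?A = ?B" by force
    finally show ?thesis by simp
  qed
  finally have "(\<Sum>k\<in>{0..<n}. \<Sum>l\<in>{0..<n}. G k l) = (\<Sum>(k,l)\<in>?A. G k l) + (\<Sum>(k,l)\<in>?A. G l k)"
    by (simp only: add_0_right)
  moreover have "(\<Sum>(k,l)\<in>?A. G k l + G l k) = (\<Sum>(k,l)\<in>?A. G k l) + (\<Sum>(k,l)\<in>?A. G l k)"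
    unfolding sum.distrib[symmetric] by (rule sum.cong) auto
  ultimately show ?thesis by (simp only:)
qed

lemma sum_nth_distinct:
  assumes "distinct xs"
  shows "(\<Sum>a\<in>{0..<length xs}. h (xs ! a)) = (\<Sum>x\<in>set xs. h x)"
  using assms by (simp add: sum.distinct_set_conv_list sum_list_sum_nth)

lemma compound2_mult_wedge_vec:
  fixes M :: "real mat" and u v :: "complex vec"
  assumes M: "M \<in> carrier_mat n n" and u: "u \<in> carrier_vec n" and v: "v \<in> carrier_vec n"
  shows "map_mat complex_of_real (compound2 M) *\<^sub>v wedge_vec n u v =
    wedge_vec n (map_mat complex_of_real M *\<^sub>v u) v + wedge_vec n u (map_mat complex_of_real M *\<^sub>v v)"
proof (rule eq_vecI)
  let ?ps = "wedge_pairs n" and ?N = "length (wedge_pairs n)"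
  let ?m = "\<lambda>x y. complex_of_real (M $$ (x,y))"
  have dim: "dim_row M = n" using M by simp
  have C: "compound2 M \<in> carrier_mat ?N ?N" unfolding compound2_def Let_def dim by simp
  show "dim_vec (map_mat complex_of_real (compound2 M) *\<^sub>v wedge_vec n u v) =
      dim_vec (wedge_vec n (map_mat complex_of_real M *\<^sub>v u) v + wedge_vec n u (map_mat complex_of_real M *\<^sub>v v))"
    using C by (simp add: wedge_vec_def)
  fix a assume "a < dim_vec (wedge_vec n (map_mat complex_of_real M *\<^sub>v u) v +
      wedge_vec n u (map_mat complex_of_real M *\<^sub>v v))"
  then have a: "a < ?N" by (simp add: wedge_vec_def)
  obtain i j where ij: "?ps ! a = (i,j)" by force
  have ijn: "i < j" "j < n" using wedge_pairs_nth[OF a] ij by auto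
  define G where "G k l = (if l = j then ?m i k * u $ k * v $ l else 0) - (if l = i then ?m j k * u $ k * v $ l else 0)
     + (if k = i then ?m j l * u $ k * v $ l else 0) - (if k = j then ?m i l * u $ k * v $ l else 0)" for k l
  define H where "H = (\<lambda>(k,l). complex_of_real ((if l = j then M $$ (i,k) else 0) - (if l = i then M $$ (j,k) else 0)
     + (if k = i then M $$ (j,l) else 0) - (if k = j then M $$ (i,l) else 0)) * (u $ k * v $ l - u $ l * v $ k))"
  have "(map_mat complex_of_real (compound2 M) *\<^sub>v wedge_vec n u v) $ a =
      (\<Sum>b\<in>{0..<?N}. complex_of_real (compound2 M $$ (a,b)) * wedge_vec n u v $ b)"
    using a C by (simp add: scalar_prod_def wedge_vec_def)
  also have "\<dots> = (\<Sum>b\<in>{0..<?N}. H (?ps ! b))"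
  proof (intro sum.cong refl)
    fix b assume b: "b \<in> {0..<?N}"
    obtain k l where kl: "?ps ! b = (k,l)" by force
    show "complex_of_real (compound2 M $$ (a,b)) * wedge_vec n u v $ b = H (?ps ! b)"
      using a b unfolding compound2_def Let_def dim wedge_vec_def by (simp add: ij kl H_def)
  qed
  also have "\<dots> = (\<Sum>x\<in>set ?ps. H x)" by (rule sum_nth_distinct[OF distinct_wedge_pairs])
  also have "\<dots> = (\<Sum>(k,l)\<in>{(k,l). k < l \<and> l < n}. G k l + G l k)"
    unfolding set_wedge_pairs by (intro sum.cong refl) (auto simp: H_def G_def algebra_simps)
  also have "\<dots> = (\<Sum>k\<in>{0..<n}. \<Sum>l\<in>{0..<n}. G k l)"
    by (rule sum_upper_pairs_symmetrize) (auto simp: G_def)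
  also have "\<dots> = (\<Sum>k\<in>{0..<n}. ?m i k * u $ k) * v $ j - (\<Sum>k\<in>{0..<n}. ?m j k * u $ k) * v $ i
      + u $ i * (\<Sum>l\<in>{0..<n}. ?m j l * v $ l) - u $ j * (\<Sum>l\<in>{0..<n}. ?m i l * v $ l)"
    using ijn unfolding G_def
    by (simp add: sum.distrib sum_subtractf sum_if_const_cond sum_distrib_left sum_distrib_right algebra_simps)
  also have "\<dots> = (wedge_vec n (map_mat complex_of_real M *\<^sub>v u) v + wedge_vec n u (map_mat complex_of_real M *\<^sub>v v)) $ a"
    using a M u v ijn by (simp add: wedge_vec_def ij scalar_prod_def algebra_simps)
  finally show "(map_mat complex_of_real (compound2 M) *\<^sub>v wedge_vec n u v) $ a =
      (wedge_vec n (map_mat complex_of_real M *\<^sub>v u) v + wedge_vec n u (map_mat complex_of_real M *\<^sub>v v)) $ a" .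
qed

lemma eigenvector_conjugate:
  fixes M :: "real mat"
  assumes M: "M \<in> carrier_mat n n" and v: "v \<in> carrier_vec n"
    and ev: "map_mat complex_of_real M *\<^sub>v v = z \<cdot>\<^sub>v v"
  shows "map_mat complex_of_real M *\<^sub>v conjugate v = cnj z \<cdot>\<^sub>v conjugate v"
proof (rule eq_vecI)
  fix i assume "i < dim_vec (cnj z \<cdot>\<^sub>v conjugate v)"
  then have i: "i < n" using v by simp
  have "(map_mat complex_of_real M *\<^sub>v conjugate v) $ i = cnj ((map_mat complex_of_real M *\<^sub>v v) $ i)"
    using i M v by (simp add: scalar_prod_def cnj_sum)
  also have "\<dots> = (cnj z \<cdot>\<^sub>v conjugate v) $ i" using ev i v by simp
  finally show "(map_mat complex_of_real M *\<^sub>v conjugate v) $ i = (cnj z \<cdot>\<^sub>v conjugate v) $ i" .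
qed (use M v in simp)

lemma wedge_vec_eq_zeroD:
  assumes "wedge_vec n u w = 0\<^sub>v (length (wedge_pairs n))" and "i < n" "j < n"
  shows "u $ i * w $ j = u $ j * w $ i"
proof -
  have less: "u $ i * w $ j = u $ j * w $ i" if "i < j" "j < n" for i j
  proof -
    have "(i,j) \<in> set (wedge_pairs n)" using that by (simp add: set_wedge_pairs)
    then obtain a where a: "a < length (wedge_pairs n)" "wedge_pairs n ! a = (i,j)"
      by (auto simp: in_set_conv_nth)
    then have "wedge_vec n u w $ a = 0" using assms(1) by simp
    then show ?thesis using a by (simp add: wedge_vec_def)
  qed
  show ?thesis
    using less[of i j] less[of j i] assms(2,3) by (cases i j rule: linorder_cases) auto
qed

text \<open>If \<open>v \<and> conj v = 0\<close>, then \<open>v\<close> is a multiple of \<open>conj v\<close>, which forces \<open>z = cnj z\<close>.\<close>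

lemma eigenvalue_real_if_wedge_conjugate_zero:
  fixes M :: "real mat"
  assumes M: "M \<in> carrier_mat n n" and v: "v \<in> carrier_vec n" "v \<noteq> 0\<^sub>v n"
    and ev: "map_mat complex_of_real M *\<^sub>v v = z \<cdot>\<^sub>v v"
    and zero: "wedge_vec n v (conjugate v) = 0\<^sub>v (length (wedge_pairs n))"
  shows "Im z = 0"
proof -
  obtain k where k: "k < n" "v $ k \<noteq> 0"
  proof -
    have "\<not> (\<forall>k<n. v $ k = 0)" using v by (metis dim_vec eq_vecI carrier_vecD index_zero_vec(1,2))
    then show ?thesis using that by blast
  qed
  define c where "c = v $ k / cnj (v $ k)"
  have parallel: "v $ l = c * cnj (v $ l)" if "l < n" for l
    using wedge_vec_eq_zeroD[OF zero that k(1)] k v(1) that unfolding c_def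
    by (simp add: field_simps)
  have row: "(\<Sum>l\<in>{0..<n}. complex_of_real (M $$ (k,l)) * v $ l) = z * v $ k"
    using arg_cong[OF ev, of "\<lambda>w. w $ k"] k(1) M v(1) by (simp add: scalar_prod_def)
  have "z * v $ k = (\<Sum>l\<in>{0..<n}. c * (complex_of_real (M $$ (k,l)) * cnj (v $ l)))"
    unfolding row[symmetric] by (intro sum.cong refl) (auto simp: parallel[symmetric])
  also have "\<dots> = c * cnj (z * v $ k)" by (simp add: sum_distrib_left[symmetric] cnj_sum row[symmetric])
  also have "\<dots> = cnj z * (c * cnj (v $ k))" by simp
  also have "c * cnj (v $ k) = v $ k" using parallel[OF k(1)] by simp
  finally have "z = cnj z" using k(2) by simp
  then show "Im z = 0" by (simp add: complex_eq_iff)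
qed

lemma wedge_vec_smult_add:
  assumes u: "u \<in> carrier_vec n" and w: "w \<in> carrier_vec n"
  shows "wedge_vec n (a \<cdot>\<^sub>v u) w + wedge_vec n u (b \<cdot>\<^sub>v w) = (a + b) \<cdot>\<^sub>v wedge_vec n u w"
proof (rule eq_vecI)
  fix c assume "c < dim_vec ((a + b) \<cdot>\<^sub>v wedge_vec n u w)"
  then have c: "c < length (wedge_pairs n)" by (simp add: wedge_vec_def)
  obtain i j where ij: "wedge_pairs n ! c = (i,j)" by force
  have "i < n" "j < n" using wedge_pairs_nth[OF c] ij by auto
  then show "(wedge_vec n (a \<cdot>\<^sub>v u) w + wedge_vec n u (b \<cdot>\<^sub>v w)) $ c = ((a + b) \<cdot>\<^sub>v wedge_vec n u w) $ c"
    using c u w by (simp add: wedge_vec_def ij algebra_simps)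
qed (simp add: wedge_vec_def)

lemma eigenvalue_compound2_add_cnj:
  fixes M :: "real mat"
  assumes M: "M \<in> carrier_mat n n" and ev: "eigenvalue (map_mat complex_of_real M) z"
    and nonreal: "Im z \<noteq> 0"
  shows "eigenvalue (map_mat complex_of_real (compound2 M)) (z + cnj z)"
proof -
  let ?N = "length (wedge_pairs n)"
  from ev obtain v where v: "v \<in> carrier_vec n" "v \<noteq> 0\<^sub>v n"
    and Mv: "map_mat complex_of_real M *\<^sub>v v = z \<cdot>\<^sub>v v"
    unfolding eigenvalue_def eigenvector_def using M by auto
  define w where "w = wedge_vec n v (conjugate v)"
  have "map_mat complex_of_real (compound2 M) *\<^sub>v w = (z + cnj z) \<cdot>\<^sub>v w"
    unfolding w_def compound2_mult_wedge_vec[OF M v(1) carrier_vec_conjugate[OF v(1)]]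
      Mv eigenvector_conjugate[OF M v(1) Mv]
    by (rule wedge_vec_smult_add[OF v(1) carrier_vec_conjugate[OF v(1)]])
  moreover have "w \<noteq> 0\<^sub>v ?N"
    using eigenvalue_real_if_wedge_conjugate_zero[OF M v Mv] nonreal unfolding w_def by blast
  moreover have "w \<in> carrier_vec ?N" unfolding w_def wedge_vec_def by simp
  moreover have "compound2 M \<in> carrier_mat ?N ?N" using M by (simp add: compound2_def Let_def)
  ultimately show ?thesis unfolding eigenvalue_def eigenvector_def by auto
qed

text \<open>A negative real eigenvalue \<open>-t\<close> is excluded by the first hypothesis; a nonreal eigenvalue
  \<open>z\<close> yields the eigenvalue \<open>2 Re z\<close> of the compound, excluded by the second.\<close>

lemma pos_semistable_if_det_shifts_nonzero:
  fixes M :: "real mat"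
  assumes M: "M \<in> carrier_mat n n"
    and shift: "\<And>t. t > 0 \<Longrightarrow> det (M + t \<cdot>\<^sub>m 1\<^sub>m n) \<noteq> 0"
    and compound_shift: "\<And>t. t > 0 \<Longrightarrow> det (compound2 M + t \<cdot>\<^sub>m 1\<^sub>m (length (wedge_pairs n))) \<noteq> 0"
  shows "pos_semistable M"
  unfolding pos_semistable_def
proof (intro conjI allI impI)
  show "dim_row M = dim_col M" using M by simp
  fix z assume ev: "eigenvalue (map_mat complex_of_real M) z"
  show "0 \<le> Re z"
  proof (rule ccontr)
    assume neg: "\<not> 0 \<le> Re z"
    show False
    proof (cases "Im z = 0")
      case True
      then have "z = complex_of_real (- (- Re z))" by (simp add: complex_eq_iff)
      with ev not_eigenvalue_if_det_shift_nonzero[OF M shift, of "- Re z"] neg show False by simp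
    next
      case False
      have C: "compound2 M \<in> carrier_mat (length (wedge_pairs n)) (length (wedge_pairs n))"
        using M by (simp add: compound2_def Let_def)
      have "z + cnj z = complex_of_real (- (- 2 * Re z))" by (simp add: complex_eq_iff)
      then show False
        using eigenvalue_compound2_add_cnj[OF M ev False] neg
          not_eigenvalue_if_det_shift_nonzero[OF C compound_shift, of "- 2 * Re z"] by simp
    qed
  qed
qed

lemma eigenvalue_transpose_mat_iff:
  fixes A :: "'a::field mat"
  assumes "A \<in> carrier_mat n n"
  shows "eigenvalue (transpose_mat A) z \<longleftrightarrow> eigenvalue A z"
  using assms eigenvalue_root_char_poly[of A n z] eigenvalue_root_char_poly[of "transpose_mat A" n z]
  by simp

lemma eigenvalue_mult_swap:
  fixes A B :: "'a::field mat"
  assumes A: "A \<in> carrier_mat n m" and B: "B \<in> carrier_mat m n"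
    and z: "z \<noteq> 0" and ev: "eigenvalue (A * B) z"
  shows "eigenvalue (B * A) z"
proof -
  from ev obtain v where v: "v \<in> carrier_vec n" "v \<noteq> 0\<^sub>v n" and ABv: "A * B *\<^sub>v v = z \<cdot>\<^sub>v v"
    unfolding eigenvalue_def eigenvector_def using A B by auto
  define u where "u = B *\<^sub>v v"
  have u: "u \<in> carrier_vec m" unfolding u_def using B v(1) by simp
  have Au: "A *\<^sub>v u = z \<cdot>\<^sub>v v" using ABv A B v(1) unfolding u_def by (simp add: assoc_mult_mat_vec)
  have "u \<noteq> 0\<^sub>v m"
  proof
    assume u0: "u = 0\<^sub>v m"
    have "v $ i = 0" if i: "i < n" for i
    proof -
      have "z * v $ i = (A *\<^sub>v u) $ i" using Au i v(1) by simp
      also have "\<dots> = 0" using u0 A i by simp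
      finally show ?thesis using z by simp
    qed
    then have "v = 0\<^sub>v n" using v(1) by (intro eq_vecI) auto
    with v(2) show False by simp
  qed
  moreover have "B * A *\<^sub>v u = z \<cdot>\<^sub>v u"
    using A B v(1) u Au unfolding u_def by (simp add: assoc_mult_mat_vec mult_mat_vec)
  ultimately show ?thesis
    unfolding eigenvalue_def eigenvector_def using u A B by auto
qed

lemma pos_semistable_mult_if_signed_incidence:
  assumes X: "signed_incidence X" and Y: "in_Q0 Y (transpose_mat X)"
  shows "pos_semistable (X * Y)"
proof -
  define n q where "n = dim_row X" and "q = dim_col X"
  have XC: "X \<in> carrier_mat n q" unfolding n_def q_def by simp
  have YC: "Y \<in> carrier_mat q n" using Y unfolding n_def q_def by (simp add: in_Q0_transpose_iff)
  note W = wedge_factors_of_signed_incidence[OF X XC Y]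
  show ?thesis
  proof (rule pos_semistable_if_det_shifts_nonzero)
    show "X * Y \<in> carrier_mat n n" using XC YC by simp
    fix t :: real assume t: "t > 0"
    show "det (X * Y + t \<cdot>\<^sub>m 1\<^sub>m n) \<noteq> 0"
      using det_mult_plus_smult_one_pos[OF X Y t] unfolding n_def by simp
    show "det (compound2 (X * Y) + t \<cdot>\<^sub>m 1\<^sub>m (length (wedge_pairs n))) \<noteq> 0"
      using det_mult_plus_smult_one_pos[OF W t] unfolding compound2_mult[OF XC YC] by simp
  qed
qed

lemma P0_matrix_compound2_mult_if_signed_incidence:
  assumes X: "signed_incidence X" and Y: "in_Q0 Y (transpose_mat X)"
  shows "P0_matrix (compound2 (X * Y))"
proof -
  have XC: "X \<in> carrier_mat (dim_row X) (dim_col X)" by simp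
  have YC: "Y \<in> carrier_mat (dim_col X) (dim_row X)" using Y by (simp add: in_Q0_transpose_iff)
  show ?thesis
    unfolding compound2_mult[OF XC YC]
    by (rule P0_matrix_mult_if_signed_incidence[OF wedge_factors_of_signed_incidence[OF X XC Y]])
qed

lemma pos_semistable_mult_if_transposed:
  fixes A B :: "real mat"
  assumes A: "A \<in> carrier_mat n m" and B: "B \<in> carrier_mat m n"
    and ss: "pos_semistable (transpose_mat A * transpose_mat B)"
  shows "pos_semistable (A * B)"
  unfolding pos_semistable_def
proof (intro conjI allI impI)
  show "dim_row (A * B) = dim_col (A * B)" using A B by simp
  let ?h = "map_mat complex_of_real"
  fix z assume ev: "eigenvalue (?h (A * B)) z"
  show "0 \<le> Re z"
  proof (cases "z = 0")
    case False
    have BA: "?h B * ?h A \<in> carrier_mat m m" using A B by simp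
    have "eigenvalue (?h B * ?h A) z"
      using eigenvalue_mult_swap[of "?h A" n m "?h B" z] A B False ev
      by (simp add: of_real_hom.mat_hom_mult)
    then have "eigenvalue (transpose_mat (?h B * ?h A)) z"
      using eigenvalue_transpose_mat_iff[OF BA] by simp
    moreover have "transpose_mat (?h B * ?h A) = ?h (transpose_mat A * transpose_mat B)"
      using transpose_mult[OF B A] of_real_hom.mat_hom_mult[OF B A] by (metis map_mat_transpose)
    ultimately show ?thesis using ss unfolding pos_semistable_def by simp
  qed simp
qed

theorem proposition4p2:
  fixes A :: "real mat" and n m :: nat
  assumes dimA: "A \<in> carrier_mat n m"
    and entries: "\<forall>i < n. \<forall>j < m. A $$ (i,j) \<in> {0, 1, -1}"
    and n2: "n \<ge> 2"
  shows "((\<forall>j < m. card {i. i < n \<and> A $$ (i,j) \<noteq> 0} \<le> 2) \<longrightarrow>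
            (\<forall>B. in_Q0 B (transpose_mat A) \<longrightarrow>
               P0_matrix (A * B) \<and> P0_matrix (compound2 (A * B)) \<and> pos_semistable (A * B)))
       \<and> ((\<forall>i < n. card {j. j < m \<and> A $$ (i,j) \<noteq> 0} \<le> 2) \<longrightarrow>
            (\<forall>B. in_Q0 B (transpose_mat A) \<longrightarrow> pos_semistable (A * B)))"
proof (intro conjI impI allI)
  fix B assume cols: "\<forall>j < m. card {i. i < n \<and> A $$ (i,j) \<noteq> 0} \<le> 2"
    and B: "in_Q0 B (transpose_mat A)"
  have A: "signed_incidence A" using dimA entries cols by (simp add: signed_incidence_def)
  show "P0_matrix (A * B)" by (rule P0_matrix_mult_if_signed_incidence[OF A B])
  show "P0_matrix (compound2 (A * B))" by (rule P0_matrix_compound2_mult_if_signed_incidence[OF A B])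
  show "pos_semistable (A * B)" by (rule pos_semistable_mult_if_signed_incidence[OF A B])
next
  fix B assume rows: "\<forall>i < n. card {j. j < m \<and> A $$ (i,j) \<noteq> 0} \<le> 2"
    and B: "in_Q0 B (transpose_mat A)"
  have "{i. i < m \<and> transpose_mat A $$ (i,k) \<noteq> 0} = {j. j < m \<and> A $$ (k,j) \<noteq> 0}" if "k < n" for k
    using dimA that by auto
  then have "signed_incidence (transpose_mat A)"
    using dimA entries rows by (simp add: signed_incidence_def)
  moreover have "in_Q0 (transpose_mat B) (transpose_mat (transpose_mat A))"
    using B by (simp add: in_Q0_transpose_swap)
  ultimately have "pos_semistable (transpose_mat A * transpose_mat B)"
    by (rule pos_semistable_mult_if_signed_incidence)
  moreover have "B \<in> carrier_mat m n" using B dimA by (simp add: in_Q0_transpose_iff)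
  ultimately show "pos_semistable (A * B)" using pos_semistable_mult_if_transposed dimA by blast
qed

end
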